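(* Let $m\ge r\ge 1$ be integers. Then $\chi(\operatorname{KG}(C(r,m)))=\chi(\operatorname{KG}(C^-(r,m)))=m-r+2$.
   Context: The matroid Kneser graph $\operatorname{KG}(M)$ has the bases of $M$ as vertices, two bases being adjacent when they are disjoint; $\chi$ is chromatic number. The Catalan matroid $C(r,m)$ is the matroid on $[m+r]$ whose bases are the $r$-subsets $\{b_1<\dots<b_r\}$ with $b_i\ge 2i-1$ for all $i$ (positions of North steps of lattice paths from $(0,0)$ to $(m,r)$ with unit East/North steps never going above the path $(NE)^rE^{m-r}$). The matroid $C^-(r,m)$ on $[m+r]$ has as bases the $r$-subsets $\{b_1<\dots<b_r\}$ with $2i-1\le b_i\le m-r+2i$ for all $i$ (paths between $(NE)^rE^{m-r}$ and $E^{m-r}(EN)^r$). Both are lattice path matroids. *)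

theory Defs
  imports Main
begin

definition chromatic_number :: "'a set \<Rightarrow> ('a \<Rightarrow> 'a \<Rightarrow> bool) \<Rightarrow> nat" where
  "chromatic_number V adj =
     (LEAST k. \<exists>f :: 'a \<Rightarrow> nat. (\<forall>v\<in>V. f v < k) \<and>
                 (\<forall>u\<in>V. \<forall>v\<in>V. adj u v \<longrightarrow> f u \<noteq> f v))"

definition kneser_adj :: "'a set \<Rightarrow> 'a set \<Rightarrow> bool" where
  "kneser_adj A B \<longleftrightarrow> A \<noteq> B \<and> A \<inter> B = {}"

definition chi_KG :: "'a set set \<Rightarrow> nat" where
  "chi_KG \<B> = chromatic_number \<B> kneser_adj"

text \<open>Bases of the Catalan matroid C(r,m) on ground set {1..m+r}: r-subsets
  b_1 < ... < b_r with b_i \<ge> 2i-1 (here with 0-based index i, b_(i+1) \<ge> 2(i+1)-1).\<close>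
definition catalan_bases :: "nat \<Rightarrow> nat \<Rightarrow> nat set set" where
  "catalan_bases r m = {B. B \<subseteq> {1..m+r} \<and> card B = r \<and>
      (\<forall>i<r. 2*(i+1) - 1 \<le> sorted_list_of_set B ! i)}"

definition catalan_minus_bases :: "nat \<Rightarrow> nat \<Rightarrow> nat set set" where
  "catalan_minus_bases r m = {B. B \<subseteq> {1..m+r} \<and> card B = r \<and>
      (\<forall>i<r. 2*(i+1) - 1 \<le> sorted_list_of_set B ! i \<and>
             sorted_list_of_set B ! i \<le> m + 2*(i+1) - r)}"

end

theory Submission
  imports Defs
begin

(*
  Colouring a basis by its least element, with all bases whose least element
  exceeds m - r + 1 sharing one last colour, is a proper colouring of KG(C(r,m)) with
  m - r + 2 colours: two disjoint bases of that last class would be 2r elements among the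
  2r - 1 largest ones. As C^-(r,m) is a subfamily, it remains to show that every proper
  colouring of KG(C^-(r,m)) with K colours has K >= m - r + 2.

  This is the alternation bound chi(KG(F)) >= N - alt(F): a sign vector on [m+r] with an
  alternating subsequence of length 2r - 1 contains, in every other term of that
  subsequence, a basis of C^-(r,m) lying in its positive or in its negative part. Labelling
  sign vectors of small alternation by their signed alternation number, and the others by
  the largest colour of a basis found on one side (signed by that side), gives an antipodal
  labelling of the first barycentric subdivision of the (m+r)-dimensional cross-polytope
  without complementary edges and with values in [-(2r - 2 + K), 2r - 2 + K]. Tucker's lemma
  then gives m + r <= 2r - 2 + K.

  Tucker's lemma is proved by the Freund-Todd argument: the happy chains of signed sets
  (those whose top element is covered by their labels) form a graph of maximum degree 2 in
  which the odd-degree vertices are the chain {{}} and the happy chains avoiding {} that have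
  as many members as their top element has elements. By the handshake lemma there is an odd
  number of the latter, but for an antipodal labelling they are paired off by negation.
*)

section \<open>Parity and finite chains of sets\<close>

lemma even_card_fixpoint_free_involution:
  assumes "finite A"
    and "\<And>x. x \<in> A \<Longrightarrow> g x \<in> A" "\<And>x. x \<in> A \<Longrightarrow> g (g x) = x" "\<And>x. x \<in> A \<Longrightarrow> g x \<noteq> x"
  shows "even (card A)"
  using assms
proof (induction "card A" arbitrary: A rule: less_induct)
  case less
  show ?case
  proof (cases "A = {}")
    case False
    then obtain x where x: "x \<in> A" by blast
    define A' where "A' = A - {x, g x}"
    have "g x \<noteq> x" "g x \<in> A" using less.prems(2,4) x by auto
    then have pair: "{x, g x} \<subseteq> A" "card {x, g x} = 2" using x by auto
    have card_A: "card A = card A' + 2"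
      using card_Diff_subset[OF _ pair(1)] card_mono[OF less.prems(1) pair(1)] less.prems(1) pair(2)
      unfolding A'_def by (simp add: finite_subset)
    have "even (card A')"
    proof (rule less.hyps)
      show "\<And>y. y \<in> A' \<Longrightarrow> g y \<in> A'"
        unfolding A'_def using less.prems(2-4) x by (auto, metis)
    qed (use card_A less.prems in \<open>auto simp: A'_def\<close>)
    then show ?thesis using card_A by simp
  qed simp
qed

lemma even_card_odd_degree_vertices:
  assumes "finite V" and edge: "\<And>u v. u \<in> V \<Longrightarrow> v \<in> E u \<Longrightarrow> v \<in> V \<and> u \<in> E v \<and> v \<noteq> u"
  shows "even (card {v\<in>V. odd (card (E v))})"
proof -
  have fin: "\<forall>u\<in>V. finite (E u)" using assms by (meson finite_subset subsetI)
  have "even (card (Sigma V E))"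
  proof (rule even_card_fixpoint_free_involution[where g = prod.swap])
    fix x assume "x \<in> Sigma V E"
    then obtain u v where "x = (u, v)" "u \<in> V" "v \<in> E u" by blast
    then show "prod.swap x \<in> Sigma V E" "prod.swap x \<noteq> x" using edge[of u v] by auto
  qed (use assms(1) fin in auto)
  also have "card (Sigma V E) = (\<Sum>v\<in>V. card (E v))" using assms(1) fin by (rule card_SigmaI)
  finally show ?thesis by (simp only: even_sum_iff[OF assms(1)])
qed

lemma card_eq_2_if_one_collision:
  assumes "finite A" and "card (f ` A) + 1 = card A"
  shows "card {v\<in>A. f v \<in> f ` (A - {v})} = 2"
proof -
  have "\<not> inj_on f A" using assms card_image by fastforce
  then obtain a b where ab: "a \<in> A" "b \<in> A" "a \<noteq> b" "f a = f b"
    unfolding inj_on_def by blast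
  have "x \<in> {a, b}" if x: "x \<in> A" "f x \<in> f ` (A - {x})" for x
  proof (rule ccontr)
    assume x_ab: "x \<notin> {a, b}"
    from x(2) obtain d where "d \<in> A - {x}" "f x = f d" by blast
    then have d: "d \<in> A" "d \<noteq> x" "f d = f x" by auto
    have "f ` A \<subseteq> f ` (A - {a, x})"
    proof
      fix y assume "y \<in> f ` A"
      then obtain z where z: "z \<in> A" "y = f z" by blast
      have fa: "f a \<in> f ` (A - {a, x})" using ab x_ab by (intro image_eqI[of _ f b]) auto
      have fx: "f x \<in> f ` (A - {a, x})"
      proof (cases "d = a")
        case True
        then show ?thesis using fa d by simp
      next
        case False
        then show ?thesis using d by (intro image_eqI[of _ f d]) auto
      qed
      show "y \<in> f ` (A - {a, x})"
        using z fa fx by (cases "z \<in> {a, x}") auto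
    qed
    then have "card (f ` A) \<le> card (A - {a, x})"
      using assms(1) by (meson card_image_le card_mono finite_Diff finite_imageI le_trans)
    moreover have "card (A - {a, x}) + 2 = card A"
    proof -
      have "{a, x} \<subseteq> A" "card {a, x} = 2" using ab x x_ab by auto
      then show ?thesis using assms(1) card_mono[of A "{a, x}"] by (simp add: card_Diff_subset)
    qed
    ultimately show False using assms(2) by linarith
  qed
  then have "{v\<in>A. f v \<in> f ` (A - {v})} = {a, b}"
    using ab by (auto intro: image_eqI[of _ _ a] image_eqI[of _ _ b])
  then show ?thesis using ab by simp
qed

lemma chain_subset_insert_iff:
  "chain\<^sub>\<subseteq> (insert W C) \<longleftrightarrow> chain\<^sub>\<subseteq> C \<and> (\<forall>X\<in>C. W \<subseteq> X \<or> X \<subseteq> W)"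
  unfolding chain_subset_def by blast

lemma chain_subset_card_le_imp_subset:
  assumes "chain\<^sub>\<subseteq> C" "finite (\<Union>C)" "X \<in> C" "Y \<in> C" "card X \<le> card Y"
  shows "X \<subseteq> Y"
proof -
  have "finite X" using assms(2,3) by (meson Union_upper finite_subset)
  then show ?thesis
    using assms(1,3-5) card_seteq[of X Y] unfolding chain_subset_def by blast
qed

lemma chain_subset_inj_on_card:
  assumes "chain\<^sub>\<subseteq> C" "finite (\<Union>C)"
  shows "inj_on card C"
proof (rule inj_onI)
  fix X Y assume "X \<in> C" "Y \<in> C" "card X = card Y"
  then show "X = Y"
    using chain_subset_card_le_imp_subset[OF assms] by (metis order_refl subset_antisym)
qed

lemma Union_in_chain_subset:
  assumes "chain\<^sub>\<subseteq> C" "finite (\<Union>C)" "C \<noteq> {}"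
  shows "\<Union>C \<in> C"
  using assms Union_in_chain finite_UnionD unfolding chain_subset_alt_def by blast

lemma card_image_card_chain_subset:
  assumes "chain\<^sub>\<subseteq> C" "finite (\<Union>C)"
  shows "card (card ` C) = card C"
  using card_image chain_subset_inj_on_card[OF assms] by blast

lemma image_card_chain_subset:
  assumes "finite (\<Union>C)"
  shows "card ` C \<subseteq> {0..card (\<Union>C)}" and "{} \<notin> C \<Longrightarrow> card ` C \<subseteq> {1..card (\<Union>C)}"
proof -
  have "finite X" "card X \<le> card (\<Union>C)" if "X \<in> C" for X
    using that assms by (auto intro: finite_subset card_mono)
  then show "card ` C \<subseteq> {0..card (\<Union>C)}" and "{} \<notin> C \<Longrightarrow> card ` C \<subseteq> {1..card (\<Union>C)}"
    by (auto simp: Suc_le_eq card_gt_0_iff)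
qed

lemma card_chain_subset_le:
  assumes "chain\<^sub>\<subseteq> C" "finite (\<Union>C)"
  shows "card C \<le> Suc (card (\<Union>C))" and "{} \<notin> C \<Longrightarrow> card C \<le> card (\<Union>C)"
  using card_mono[OF _ image_card_chain_subset(1)[OF assms(2)]]
    card_mono[OF _ image_card_chain_subset(2)[OF assms(2)]]
  by (simp_all add: card_image_card_chain_subset[OF assms])

lemma chain_subset_insert_card_notin:
  assumes "chain\<^sub>\<subseteq> (insert W C)" "finite (\<Union>(insert W C))" "W \<notin> C"
  shows "card W \<notin> card ` C"
  using chain_subset_inj_on_card[OF assms(1,2)] assms(3) by (auto simp: inj_on_def)

lemma chain_subset_extensions_without_empty:
  assumes "chain\<^sub>\<subseteq> C" "finite (\<Union>C)" "{} \<notin> C" "card C = card (\<Union>C)"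
  shows "{W. W \<notin> C \<and> chain\<^sub>\<subseteq> (insert W C) \<and> W \<subseteq> \<Union>C} = {{}}"
proof -
  have sizes: "card ` C = {1..card (\<Union>C)}"
    using image_card_chain_subset(2)[OF assms(2,3)] card_image_card_chain_subset[OF assms(1,2)] assms(4)
    by (intro card_subset_eq) auto
  have "W = {}" if W: "W \<notin> C" "chain\<^sub>\<subseteq> (insert W C)" "W \<subseteq> \<Union>C" for W
  proof (rule ccontr)
    assume "W \<noteq> {}"
    moreover have "finite W" using finite_subset[OF W(3) assms(2)] .
    ultimately have "card W \<in> {1..card (\<Union>C)}"
      using card_mono[OF assms(2) W(3)] by (simp add: Suc_le_eq card_gt_0_iff)
    moreover have "\<Union>(insert W C) = \<Union>C" using W(3) by blast
    ultimately show False using chain_subset_insert_card_notin[OF W(2) _ W(1)] sizes assms(2) by auto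
  qed
  moreover have "chain\<^sub>\<subseteq> (insert {} C)"
    using assms(1) by (simp add: chain_subset_insert_iff)
  ultimately show ?thesis using assms(3) by auto
qed

lemma chain_subset_missing_card:
  assumes chain: "chain\<^sub>\<subseteq> C" and fin: "finite (\<Union>C)" and "{} \<in> C" and tight: "card C = card (\<Union>C)"
  obtains j where "0 < j" "j < card (\<Union>C)" "\<And>k. k \<in> card ` C \<longleftrightarrow> k \<le> card (\<Union>C) \<and> k \<noteq> j"
proof -
  define U where "U = \<Union>C"
  have "U \<in> C" unfolding U_def using Union_in_chain_subset[OF chain fin] \<open>{} \<in> C\<close> by blast
  have sizes_sub: "card ` C \<subseteq> {0..card U}" using image_card_chain_subset(1)[OF fin] unfolding U_def .
  have "card ({0..card U} - card ` C) = 1"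
    using card_image_card_chain_subset[OF chain fin] tight finite_subset[OF sizes_sub]
    unfolding U_def by (simp add: card_Diff_subset sizes_sub[unfolded U_def])
  then obtain j where j: "{0..card U} - card ` C = {j}" by (rule card_1_singletonE)
  have sizes: "k \<in> card ` C \<longleftrightarrow> k \<le> card U \<and> k \<noteq> j" for k
  proof -
    have "k \<in> {0..card U} - card ` C \<longleftrightarrow> k = j" using j by blast
    then show ?thesis using sizes_sub by auto
  qed
  have "0 \<in> card ` C" using imageI[OF \<open>{} \<in> C\<close>, of card] by simp
  moreover have "card U \<in> card ` C" using \<open>U \<in> C\<close> by (rule imageI)
  ultimately have "0 < j" "j < card U" using sizes j by auto
  then show ?thesis using that sizes unfolding U_def by blast
qed

lemma chain_subset_extensions_eq:
  assumes chain: "chain\<^sub>\<subseteq> C" and fin: "finite (\<Union>C)"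
    and sizes: "\<And>k. k \<in> card ` C \<longleftrightarrow> k \<le> card (\<Union>C) \<and> k \<noteq> j"
    and a: "a \<in> C" "Suc (card a) = j" and b: "b \<in> C" "card b = Suc j"
  shows "{W. W \<notin> C \<and> chain\<^sub>\<subseteq> (insert W C) \<and> W \<subseteq> \<Union>C} = (\<lambda>z. insert z a) ` (b - a)"
proof -
  have sub: "X \<subseteq> Y" if "X \<in> C" "Y \<in> C" "card X \<le> card Y" for X Y
    using chain_subset_card_le_imp_subset[OF chain fin that] .
  have "a \<subseteq> b" using sub[OF a(1) b(1)] a b by simp
  have fin_b: "finite b" using b(1) fin by (meson Union_upper finite_subset)
  show ?thesis
  proof (intro set_eqI iffI)
    fix W assume "W \<in> {W. W \<notin> C \<and> chain\<^sub>\<subseteq> (insert W C) \<and> W \<subseteq> \<Union>C}"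
    then have W: "W \<notin> C" "chain\<^sub>\<subseteq> (insert W C)" "W \<subseteq> \<Union>C" by auto
    have "finite W" using finite_subset[OF W(3) fin] .
    have "\<Union>(insert W C) = \<Union>C" using W(3) by blast
    then have "card W \<notin> card ` C" using chain_subset_insert_card_notin[OF W(2) _ W(1)] fin by simp
    then have "card W = j" using sizes card_mono[OF fin W(3)] by auto
    have "W \<subseteq> a \<or> a \<subseteq> W" "W \<subseteq> b \<or> b \<subseteq> W"
      using W(2) a(1) b(1) unfolding chain_subset_def by blast+
    moreover have "\<not> W \<subseteq> a" using card_mono[OF finite_subset[OF \<open>a \<subseteq> b\<close> fin_b], of W] a \<open>card W = j\<close> by auto
    moreover have "\<not> b \<subseteq> W" using card_mono[OF \<open>finite W\<close>, of b] b \<open>card W = j\<close> by auto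
    ultimately have "a \<subseteq> W" and "W \<subseteq> b" by blast+
    then have "card (W - a) = 1"
      using \<open>finite W\<close> \<open>card W = j\<close> a by (simp add: card_Diff_subset finite_subset)
    then obtain z where "W - a = {z}" by (rule card_1_singletonE)
    then show "W \<in> (\<lambda>z. insert z a) ` (b - a)" using \<open>a \<subseteq> W\<close> \<open>W \<subseteq> b\<close> by blast
  next
    fix W assume "W \<in> (\<lambda>z. insert z a) ` (b - a)"
    then obtain z where z: "z \<in> b" "z \<notin> a" "W = insert z a" by blast
    have "card W = j" using z a fin_b \<open>a \<subseteq> b\<close> by (simp add: finite_subset)
    have "\<forall>X\<in>C. W \<subseteq> X \<or> X \<subseteq> W"
    proof
      fix X assume "X \<in> C"
      then have "card X \<noteq> j" using sizes[of "card X"] by blast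
      then have "card X \<le> card a \<or> card b \<le> card X" using a b by linarith
      then show "W \<subseteq> X \<or> X \<subseteq> W" using sub[OF \<open>X \<in> C\<close> a(1)] sub[OF b(1) \<open>X \<in> C\<close>] z \<open>a \<subseteq> b\<close> by blast
    qed
    moreover have "W \<notin> C" using sizes \<open>card W = j\<close> by blast
    moreover have "W \<subseteq> \<Union>C" using z \<open>a \<subseteq> b\<close> b(1) by blast
    ultimately show "W \<in> {W. W \<notin> C \<and> chain\<^sub>\<subseteq> (insert W C) \<and> W \<subseteq> \<Union>C}"
      using chain by (simp add: chain_subset_insert_iff)
  qed
qed

lemma card_chain_subset_extensions_with_empty:
  assumes chain: "chain\<^sub>\<subseteq> C" and fin: "finite (\<Union>C)" and "{} \<in> C" and "card C = card (\<Union>C)"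
  shows "card {W. W \<notin> C \<and> chain\<^sub>\<subseteq> (insert W C) \<and> W \<subseteq> \<Union>C} = 2"
proof -
  obtain j where "0 < j" "j < card (\<Union>C)" and sizes: "\<And>k. k \<in> card ` C \<longleftrightarrow> k \<le> card (\<Union>C) \<and> k \<noteq> j"
    using chain_subset_missing_card[OF assms] by blast
  obtain a where a: "a \<in> C" "Suc (card a) = j" using sizes[of "j - 1"] \<open>0 < j\<close> \<open>j < card (\<Union>C)\<close> by force
  obtain b where b: "b \<in> C" "card b = Suc j" using sizes[of "Suc j"] \<open>j < card (\<Union>C)\<close> by force
  have "a \<subseteq> b" using chain_subset_card_le_imp_subset[OF chain fin a(1) b(1)] a b by simp
  moreover have "finite b" using b(1) fin by (meson Union_upper finite_subset)
  ultimately have "card (b - a) = 2" using a b by (simp add: card_Diff_subset finite_subset)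
  moreover have "inj_on (\<lambda>z. insert z a) (b - a)" by (auto simp: inj_on_def)
  ultimately show ?thesis
    unfolding chain_subset_extensions_eq[OF chain fin sizes a b] by (simp add: card_image)
qed

section \<open>Signed sets\<close>

(* A signed set X encodes the sign vector x in {+,-,0}^n with x_i = + if i is in X and x_i = - if -i is in X. *)
definition signed_sets :: "nat \<Rightarrow> int set set" where
  "signed_sets n = {X. X \<subseteq> {-int n..int n} - {0} \<and> (\<forall>i\<in>X. -i \<notin> X)}"

lemma finite_signed_set: "X \<in> signed_sets n \<Longrightarrow> finite X"
  unfolding signed_sets_def by (auto intro: finite_subset)

lemma finite_signed_sets: "finite (signed_sets n)"
  by (rule finite_subset[of _ "Pow {-int n..int n}"]) (auto simp: signed_sets_def)

lemma signed_sets_subset: "X \<in> signed_sets n \<Longrightarrow> Y \<subseteq> X \<Longrightarrow> Y \<in> signed_sets n"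
  unfolding signed_sets_def by blast

lemma empty_in_signed_sets [simp]: "{} \<in> signed_sets n"
  unfolding signed_sets_def by simp

lemma image_uminus_in_signed_sets: "X \<in> signed_sets n \<Longrightarrow> uminus ` X \<in> signed_sets n"
  unfolding signed_sets_def by auto

definition sign_chain :: "nat \<Rightarrow> int set set \<Rightarrow> bool" where
  "sign_chain n C \<longleftrightarrow> C \<subseteq> signed_sets n \<and> C \<noteq> {} \<and> chain\<^sub>\<subseteq> C"

lemma finite_Union_sign_chain: "sign_chain n C \<Longrightarrow> finite (\<Union>C)"
  unfolding sign_chain_def
  by (intro finite_Union) (auto intro: finite_subset[OF _ finite_signed_sets] finite_signed_set)

lemma finite_sign_chain: "sign_chain n C \<Longrightarrow> finite C"
  using finite_Union_sign_chain finite_UnionD by blast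

lemma finite_sign_chains: "finite {C. sign_chain n C}"
  by (rule finite_subset[of _ "Pow (signed_sets n)"]) (auto simp: sign_chain_def finite_signed_sets)

lemma Union_in_sign_chain: "sign_chain n C \<Longrightarrow> \<Union>C \<in> C"
  using Union_in_chain_subset finite_Union_sign_chain unfolding sign_chain_def by blast

lemma Union_sign_chain_in_signed_sets: "sign_chain n C \<Longrightarrow> \<Union>C \<in> signed_sets n"
  using Union_in_sign_chain unfolding sign_chain_def by blast

lemma sign_chain_insert_iff:
  "sign_chain n C \<Longrightarrow> sign_chain n (insert W C) \<longleftrightarrow> W \<in> signed_sets n \<and> (\<forall>X\<in>C. W \<subseteq> X \<or> X \<subseteq> W)"
  unfolding sign_chain_def chain_subset_insert_iff by blast

lemma sign_chain_subset: "sign_chain n C \<Longrightarrow> D \<subseteq> C \<Longrightarrow> D \<noteq> {} \<Longrightarrow> sign_chain n D"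
  unfolding sign_chain_def chain_subset_def by blast

lemma sign_chain_image_uminus:
  assumes "sign_chain n C"
  shows "sign_chain n (image uminus ` C)"
proof -
  have "uminus ` A \<subseteq> uminus ` B \<or> uminus ` B \<subseteq> uminus ` A" if "A \<in> C" "B \<in> C" for A B :: "int set"
    using assms that image_mono unfolding sign_chain_def chain_subset_def by metis
  then have "chain\<^sub>\<subseteq> (image uminus ` C)" unfolding chain_subset_def by blast
  then show ?thesis using assms image_uminus_in_signed_sets unfolding sign_chain_def by blast
qed

lemma image_uminus_sign_chain_neq:
  assumes "sign_chain n C" "{} \<notin> C"
  shows "image uminus ` C \<noteq> C"
proof
  assume eq: "image uminus ` C = C"
  have "\<Union>C \<in> C" using assms(1) by (rule Union_in_sign_chain)
  then obtain i where i: "i \<in> \<Union>C" using assms(2) by (metis ex_in_conv)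
  have "uminus ` \<Union>C \<in> C" using imageI[OF \<open>\<Union>C \<in> C\<close>, of "image uminus"] eq by simp
  then have "-i \<in> \<Union>C" using i by blast
  then show False
    using i Union_sign_chain_in_signed_sets[OF assms(1)] unfolding signed_sets_def by blast
qed

section \<open>Tucker's lemma\<close>

locale complementary_free_labelling =
  fixes n :: nat and L :: "int set \<Rightarrow> int"
  assumes label_empty: "L {} = int n"
    and label_range: "X \<in> signed_sets n \<Longrightarrow> L X \<noteq> 0 \<and> \<bar>L X\<bar> \<le> int n"
    and no_complementary_edge:
      "X \<in> signed_sets n \<Longrightarrow> Y \<in> signed_sets n \<Longrightarrow> X \<subseteq> Y \<Longrightarrow> L X \<noteq> - L Y"
begin

lemma no_complementary_labels_in_chain:
  assumes "sign_chain n C" "X \<in> C" "Y \<in> C"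
  shows "L X \<noteq> - L Y"
proof -
  have "X \<in> signed_sets n" "Y \<in> signed_sets n" "X \<subseteq> Y \<or> Y \<subseteq> X"
    using assms unfolding sign_chain_def chain_subset_def by blast+
  then show ?thesis using no_complementary_edge[of X Y] no_complementary_edge[of Y X] by auto
qed

(* Chains of signed sets are the simplices of the first barycentric subdivision of the cross-polytope. *)
definition happy :: "int set set \<Rightarrow> bool" where
  "happy C \<longleftrightarrow> sign_chain n C \<and> \<Union>C \<subseteq> L ` C"

definition up_neighbours :: "int set set \<Rightarrow> int set set set" where
  "up_neighbours C = {D. sign_chain n D \<and> C \<subseteq> D \<and> card D = Suc (card C) \<and> \<Union>D \<subseteq> L ` C}"

definition down_neighbours :: "int set set \<Rightarrow> int set set set" where
  "down_neighbours C = {D. sign_chain n D \<and> C \<in> up_neighbours D}"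

definition neighbours :: "int set set \<Rightarrow> int set set set" where
  "neighbours C = up_neighbours C \<union> down_neighbours C"

lemma happy_card_bounds:
  assumes "happy C"
  shows "card (\<Union>C) \<le> card (L ` C)" and "card (L ` C) \<le> card C" and "card C \<le> Suc (card (\<Union>C))"
proof -
  have chain: "sign_chain n C" and cover: "\<Union>C \<subseteq> L ` C" using assms by (auto simp: happy_def)
  show "card (\<Union>C) \<le> card (L ` C)" using cover finite_sign_chain[OF chain] by (intro card_mono) auto
  show "card (L ` C) \<le> card C" by (rule card_image_le[OF finite_sign_chain[OF chain]])
  show "card C \<le> Suc (card (\<Union>C))"
    using chain card_chain_subset_le(1) finite_Union_sign_chain unfolding sign_chain_def by blast
qed

lemma up_neighbours_eq:
  assumes "sign_chain n C"
  shows "up_neighbours C =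
    (\<lambda>W. insert W C) ` {W. W \<notin> C \<and> sign_chain n (insert W C) \<and> W \<union> \<Union>C \<subseteq> L ` C}"
proof (intro set_eqI iffI)
  fix D assume "D \<in> up_neighbours C"
  then have D: "sign_chain n D" "C \<subseteq> D" "card D = Suc (card C)" "\<Union>D \<subseteq> L ` C"
    unfolding up_neighbours_def by auto
  have "finite D" using D(1) by (rule finite_sign_chain)
  then have "card (D - C) = 1"
    using card_Diff_subset[OF finite_subset[OF D(2)] D(2)] D(3) by simp
  then obtain W where "D - C = {W}" by (rule card_1_singletonE)
  then have "D = insert W C" "W \<notin> C" using D(2) by auto
  moreover have "W \<union> \<Union>C \<subseteq> L ` C" using D(4) \<open>D = insert W C\<close> by simp
  ultimately show "D \<in> (\<lambda>W. insert W C) ` {W. W \<notin> C \<and> sign_chain n (insert W C) \<and> W \<union> \<Union>C \<subseteq> L ` C}"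
    using D(1) by blast
next
  fix D assume "D \<in> (\<lambda>W. insert W C) ` {W. W \<notin> C \<and> sign_chain n (insert W C) \<and> W \<union> \<Union>C \<subseteq> L ` C}"
  then obtain W where W: "D = insert W C" "W \<notin> C" "sign_chain n (insert W C)" "W \<union> \<Union>C \<subseteq> L ` C"
    by blast
  then show "D \<in> up_neighbours C"
    using finite_sign_chain[OF assms] unfolding up_neighbours_def by (simp add: subset_insertI)
qed

lemma card_up_neighbours:
  assumes "sign_chain n C"
  shows "card (up_neighbours C) = card {W. W \<notin> C \<and> sign_chain n (insert W C) \<and> W \<union> \<Union>C \<subseteq> L ` C}"
  unfolding up_neighbours_eq[OF assms] by (rule card_image) (auto simp: inj_on_def)

lemma down_neighbours_eq:
  assumes "sign_chain n C"
  shows "down_neighbours C = (\<lambda>V. C - {V}) ` {V\<in>C. C - {V} \<noteq> {} \<and> \<Union>C \<subseteq> L ` (C - {V})}"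
proof (intro set_eqI iffI)
  fix D assume "D \<in> down_neighbours C"
  then have D: "sign_chain n D" "D \<subseteq> C" "card C = Suc (card D)" "\<Union>C \<subseteq> L ` D"
    unfolding down_neighbours_def up_neighbours_def by auto
  have "finite C" using assms by (rule finite_sign_chain)
  then have "card (C - D) = 1"
    using card_Diff_subset[OF finite_subset[OF D(2)] D(2)] D(3) by simp
  then obtain V where "C - D = {V}" by (rule card_1_singletonE)
  then have "D = C - {V}" "V \<in> C" using D(2) by auto
  moreover have "D \<noteq> {}" using D(1) unfolding sign_chain_def by blast
  ultimately show "D \<in> (\<lambda>V. C - {V}) ` {V\<in>C. C - {V} \<noteq> {} \<and> \<Union>C \<subseteq> L ` (C - {V})}"
    using D(4) by blast
next
  fix D assume "D \<in> (\<lambda>V. C - {V}) ` {V\<in>C. C - {V} \<noteq> {} \<and> \<Union>C \<subseteq> L ` (C - {V})}"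
  then obtain V where V: "D = C - {V}" "V \<in> C" "C - {V} \<noteq> {}" "\<Union>C \<subseteq> L ` (C - {V})" by blast
  have "sign_chain n D" using sign_chain_subset[OF assms, of D] V(1,3) by blast
  moreover have "card C = Suc (card D)"
    using card_Suc_Diff1[OF finite_sign_chain[OF assms] V(2)] V(1) by simp
  ultimately show "D \<in> down_neighbours C"
    using assms V(1,4) unfolding down_neighbours_def up_neighbours_def by auto
qed

lemma card_down_neighbours:
  assumes "sign_chain n C"
  shows "card (down_neighbours C) = card {V\<in>C. C - {V} \<noteq> {} \<and> \<Union>C \<subseteq> L ` (C - {V})}"
  unfolding down_neighbours_eq[OF assms] by (rule card_image) (auto simp: inj_on_def)

lemma finite_neighbours: "finite (neighbours C)"
  unfolding neighbours_def up_neighbours_def down_neighbours_def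
  by (auto intro: finite_subset[OF _ finite_sign_chains])

lemma card_neighbours_eq:
  "card (neighbours C) = card (up_neighbours C) + card (down_neighbours C)"
proof -
  have "up_neighbours C \<inter> down_neighbours C = {}"
    unfolding up_neighbours_def down_neighbours_def by auto
  then show ?thesis using finite_neighbours[of C] unfolding neighbours_def by (simp add: card_Un_disjoint)
qed

lemma card_neighbours_tight:
  assumes "happy C" and tight: "card C = card (\<Union>C)"
  shows "card (neighbours C) = (if {} \<in> C then 2 else 1)"
proof -
  have chain: "sign_chain n C" and cover: "\<Union>C \<subseteq> L ` C" using assms(1) by (auto simp: happy_def)
  have fin: "finite C" "finite (\<Union>C)"
    using chain by (auto intro: finite_sign_chain finite_Union_sign_chain)
  have labels: "L ` C = \<Union>C"
    using card_seteq[OF finite_imageI[OF fin(1)] cover] card_image_le[OF fin(1), of L] tight by simp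
  have "\<not> \<Union>C \<subseteq> L ` (C - {V})" if "V \<in> C" for V
  proof
    assume "\<Union>C \<subseteq> L ` (C - {V})"
    then have "card (\<Union>C) \<le> card (C - {V})"
      using fin(1) by (meson card_image_le card_mono finite_Diff finite_imageI le_trans)
    then show False using card_Suc_Diff1[OF fin(1) that] tight by linarith
  qed
  then have no_down: "{V\<in>C. C - {V} \<noteq> {} \<and> \<Union>C \<subseteq> L ` (C - {V})} = {}" by blast
  have down: "card (down_neighbours C) = 0" unfolding card_down_neighbours[OF chain] no_down by simp
  have "chain\<^sub>\<subseteq> C" using chain by (simp add: sign_chain_def)
  have "\<Union>C \<in> signed_sets n" using chain by (rule Union_sign_chain_in_signed_sets)
  have "sign_chain n (insert W C) \<and> W \<union> \<Union>C \<subseteq> L ` C \<longleftrightarrow> chain\<^sub>\<subseteq> (insert W C) \<and> W \<subseteq> \<Union>C" for W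
    using signed_sets_subset[OF \<open>\<Union>C \<in> signed_sets n\<close>, of W] \<open>chain\<^sub>\<subseteq> C\<close>
    unfolding labels sign_chain_insert_iff[OF chain] chain_subset_insert_iff by blast
  then have "{W. W \<notin> C \<and> sign_chain n (insert W C) \<and> W \<union> \<Union>C \<subseteq> L ` C} =
      {W. W \<notin> C \<and> chain\<^sub>\<subseteq> (insert W C) \<and> W \<subseteq> \<Union>C}" by blast
  then have "card (up_neighbours C) = (if {} \<in> C then 2 else 1)"
    using card_up_neighbours[OF chain] chain_subset_extensions_without_empty[OF \<open>chain\<^sub>\<subseteq> C\<close> fin(2) _ tight]
      card_chain_subset_extensions_with_empty[OF \<open>chain\<^sub>\<subseteq> C\<close> fin(2) _ tight] by auto
  then show ?thesis using down card_neighbours_eq by simp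
qed

lemma card_neighbours_repeated_label:
  assumes "happy C" and full: "card C = Suc (card (\<Union>C))" and "card (L ` C) = card (\<Union>C)"
  shows "card (neighbours C) = 2"
proof -
  have chain: "sign_chain n C" and cover: "\<Union>C \<subseteq> L ` C" using assms(1) by (auto simp: happy_def)
  have fin: "finite C" using chain by (rule finite_sign_chain)
  have labels: "L ` C = \<Union>C"
    using card_seteq[OF finite_imageI[OF fin] cover] assms(3) by simp
  have "\<not> (W \<notin> C \<and> sign_chain n (insert W C) \<and> W \<union> \<Union>C \<subseteq> L ` C)" for W
  proof
    assume W: "W \<notin> C \<and> sign_chain n (insert W C) \<and> W \<union> \<Union>C \<subseteq> L ` C"
    then have "chain\<^sub>\<subseteq> (insert W C)" by (simp add: sign_chain_def)
    then have "card (insert W C) \<le> Suc (card (\<Union>(insert W C)))"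
      using card_chain_subset_le(1) finite_Union_sign_chain W by blast
    moreover have "\<Union>(insert W C) = \<Union>C" using W labels by auto
    ultimately show False using W fin full by simp
  qed
  then have no_up: "{W. W \<notin> C \<and> sign_chain n (insert W C) \<and> W \<union> \<Union>C \<subseteq> L ` C} = {}" by blast
  have up: "card (up_neighbours C) = 0" unfolding card_up_neighbours[OF chain] no_up by simp
  have "C - {V} \<noteq> {} \<and> \<Union>C \<subseteq> L ` (C - {V}) \<longleftrightarrow> L V \<in> L ` (C - {V})" if "V \<in> C" for V
  proof -
    have split: "L ` C = insert (L V) (L ` (C - {V}))" using that by blast
    show ?thesis
    proof
      assume "C - {V} \<noteq> {} \<and> \<Union>C \<subseteq> L ` (C - {V})"
      then show "L V \<in> L ` (C - {V})" using split labels by blast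
    next
      assume "L V \<in> L ` (C - {V})"
      then have "L ` (C - {V}) = \<Union>C" using split labels by (simp add: insert_absorb)
      then show "C - {V} \<noteq> {} \<and> \<Union>C \<subseteq> L ` (C - {V})" using \<open>L V \<in> L ` (C - {V})\<close> by auto
    qed
  qed
  then have "{V\<in>C. C - {V} \<noteq> {} \<and> \<Union>C \<subseteq> L ` (C - {V})} = {V\<in>C. L V \<in> L ` (C - {V})}" by blast
  then have "card (down_neighbours C) = 2"
    using card_down_neighbours[OF chain] card_eq_2_if_one_collision[OF fin] full assms(3) by simp
  then show ?thesis using up card_neighbours_eq by simp
qed

lemma happy_distinct_labels_extra_label:
  assumes "happy C" and full: "card C = Suc (card (\<Union>C))" and inj: "inj_on L C"
  obtains V0 l where "V0 \<in> C" "L V0 = l" "l \<notin> \<Union>C" "L ` C = insert l (\<Union>C)"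
proof -
  have chain: "sign_chain n C" and cover: "\<Union>C \<subseteq> L ` C" using assms(1) by (auto simp: happy_def)
  have "card (L ` C - \<Union>C) = 1"
    using card_image[OF inj] full cover finite_sign_chain[OF chain] finite_Union_sign_chain[OF chain]
    by (simp add: card_Diff_subset)
  then obtain l where "L ` C - \<Union>C = {l}" by (rule card_1_singletonE)
  then have "L ` C = insert l (\<Union>C)" "l \<notin> \<Union>C" using cover by auto
  then show ?thesis using that by (metis imageE insertI1)
qed

lemma card_down_neighbours_distinct_labels:
  assumes "happy C" and full: "card C = Suc (card (\<Union>C))" and inj: "inj_on L C"
  shows "card (down_neighbours C) = (if C = {{}} then 0 else 1)"
proof -
  have chain: "sign_chain n C" using assms(1) by (simp add: happy_def)
  obtain V0 l where V0: "V0 \<in> C" "L V0 = l" "l \<notin> \<Union>C" and labels: "L ` C = insert l (\<Union>C)"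
    using happy_distinct_labels_extra_label[OF assms] .
  have "\<Union>C \<subseteq> L ` (C - {V}) \<longleftrightarrow> V = V0" if "V \<in> C" for V
  proof -
    have removed: "L ` (C - {V}) = L ` C - {L V}" using inj that by (auto simp: inj_on_def)
    show ?thesis
    proof (cases "V = V0")
      case True
      then show ?thesis using removed labels V0(2,3) by auto
    next
      case False
      then have "L V \<noteq> l" using inj that V0(1,2) by (auto simp: inj_on_def)
      then have "L V \<in> \<Union>C" using labels that by blast
      then show ?thesis using False removed by blast
    qed
  qed
  moreover have "C - {V0} = {} \<longleftrightarrow> C = {{}}"
  proof
    assume "C - {V0} = {}"
    then have "C = {V0}" using V0(1) by blast
    then show "C = {{}}" using full finite_Union_sign_chain[OF chain] by simp
  qed (use V0(1) in auto)
  ultimately have "{V\<in>C. C - {V} \<noteq> {} \<and> \<Union>C \<subseteq> L ` (C - {V})} = (if C = {{}} then {} else {V0})"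
    using V0(1) by auto
  then show ?thesis unfolding card_down_neighbours[OF chain] by simp
qed

lemma card_up_neighbours_distinct_labels:
  assumes "happy C" and full: "card C = Suc (card (\<Union>C))" and inj: "inj_on L C"
  shows "card (up_neighbours C) = 1"
proof -
  have chain: "sign_chain n C" and cover: "\<Union>C \<subseteq> L ` C" using assms(1) by (auto simp: happy_def)
  have fin: "finite C" "finite (\<Union>C)"
    using chain by (auto intro: finite_sign_chain finite_Union_sign_chain)
  obtain V0 l where V0: "V0 \<in> C" "L V0 = l" "l \<notin> \<Union>C" and labels: "L ` C = insert l (\<Union>C)"
    using happy_distinct_labels_extra_label[OF assms] .
  define U where "U = \<Union>C"
  have "U \<in> C" unfolding U_def using chain by (rule Union_in_sign_chain)
  have "W = insert l U" if W: "W \<notin> C" "sign_chain n (insert W C)" "W \<union> U \<subseteq> L ` C" for W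
  proof -
    have "chain\<^sub>\<subseteq> (insert W C)" using W(2) by (simp add: sign_chain_def)
    then have "card (insert W C) \<le> Suc (card (\<Union>(insert W C)))"
      using card_chain_subset_le(1) finite_Union_sign_chain W(2) by blast
    then have "card (insert l U) \<le> card (W \<union> U)"
      using W(1) fin V0(3) full unfolding U_def by simp
    then have "W \<union> U = insert l U" using W(3) fin(2) unfolding labels U_def by (simp add: card_seteq)
    moreover have "W \<subseteq> U \<or> U \<subseteq> W" using \<open>U \<in> C\<close> W(2) by (simp add: sign_chain_insert_iff[OF chain])
    ultimately show ?thesis using V0(3) unfolding U_def by blast
  qed
  moreover have "insert l U \<in> signed_sets n"
  proof -
    have "l \<noteq> 0 \<and> \<bar>l\<bar> \<le> int n"
      using label_range V0(1,2) chain unfolding sign_chain_def by blast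
    moreover have "-l \<notin> U"
      using no_complementary_labels_in_chain[OF chain V0(1)] V0(2) cover unfolding U_def by force
    moreover have "U \<in> signed_sets n" unfolding U_def using chain by (rule Union_sign_chain_in_signed_sets)
    ultimately show ?thesis unfolding signed_sets_def by auto
  qed
  then have "sign_chain n (insert (insert l U) C)"
    using chain unfolding sign_chain_insert_iff[OF chain] U_def by blast
  moreover have "insert l U \<notin> C" using V0(3) unfolding U_def by blast
  ultimately have "{W. W \<notin> C \<and> sign_chain n (insert W C) \<and> W \<union> U \<subseteq> L ` C} = {insert l U}"
    using labels unfolding U_def by blast
  then show ?thesis unfolding card_up_neighbours[OF chain] U_def[symmetric] by simp
qed

lemma card_neighbours:
  assumes "happy C"
  shows "card (neighbours C) = (if C = {{}} \<or> ({} \<notin> C \<and> card C = card (\<Union>C)) then 1 else 2)"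
proof -
  have fin: "finite C" using assms finite_sign_chain unfolding happy_def by blast
  consider (tight) "card C = card (\<Union>C)"
    | (repeated) "card C = Suc (card (\<Union>C))" "card (L ` C) = card (\<Union>C)"
    | (distinct) "card C = Suc (card (\<Union>C))" "card (L ` C) = card C"
    using happy_card_bounds[OF assms] by linarith
  then show ?thesis
  proof cases
    case tight
    then show ?thesis using card_neighbours_tight[OF assms] by auto
  next
    case repeated
    then have "C \<noteq> {{}}" by auto
    then show ?thesis using card_neighbours_repeated_label[OF assms repeated] repeated(1) by simp
  next
    case distinct
    then have "inj_on L C" using fin by (simp add: eq_card_imp_inj_on)
    then show ?thesis
      using card_down_neighbours_distinct_labels[OF assms distinct(1)]
        card_up_neighbours_distinct_labels[OF assms distinct(1)] card_neighbours_eq distinct(1) by auto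
  qed
qed

lemma neighbours_sym:
  assumes "happy C" and "D \<in> neighbours C"
  shows "happy D \<and> C \<in> neighbours D \<and> D \<noteq> C"
proof -
  consider (up) "D \<in> up_neighbours C" | (down) "D \<in> down_neighbours C"
    using assms(2) unfolding neighbours_def by blast
  then show ?thesis
  proof cases
    case up
    then have D: "sign_chain n D" "C \<subseteq> D" "card D = Suc (card C)" "\<Union>D \<subseteq> L ` C"
      unfolding up_neighbours_def by auto
    then have "happy D" using image_mono[OF D(2), of L] unfolding happy_def by blast
    moreover have "C \<in> down_neighbours D"
      using assms(1) up unfolding down_neighbours_def happy_def by blast
    ultimately show ?thesis using D(3) unfolding neighbours_def by auto
  next
    case down
    then have D: "sign_chain n D" "D \<subseteq> C" "card C = Suc (card D)" "\<Union>C \<subseteq> L ` D"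
      unfolding down_neighbours_def up_neighbours_def by auto
    then have "happy D" using Union_mono[OF D(2)] unfolding happy_def by blast
    moreover have "C \<in> up_neighbours D" using down unfolding down_neighbours_def by blast
    ultimately show ?thesis using D(3) unfolding neighbours_def by auto
  qed
qed

theorem odd_card_tight_happy_chains: "odd (card {C. happy C \<and> {} \<notin> C \<and> card C = card (\<Union>C)})"
proof -
  let ?T = "{C. happy C \<and> {} \<notin> C \<and> card C = card (\<Union>C)}"
  have fin: "finite {C. happy C}"
    by (rule finite_subset[OF _ finite_sign_chains]) (auto simp: happy_def)
  have even: "even (card {C\<in>{C. happy C}. odd (card (neighbours C))})"
    by (rule even_card_odd_degree_vertices[OF fin]) (use neighbours_sym in blast)
  have "happy {{}}" unfolding happy_def sign_chain_def chain_subset_def by simp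
  moreover have "odd (card (neighbours C)) \<longleftrightarrow> C = {{}} \<or> ({} \<notin> C \<and> card C = card (\<Union>C))"
    if "happy C" for C
    using card_neighbours[OF that] by simp
  ultimately have "{C\<in>{C. happy C}. odd (card (neighbours C))} = insert {{}} ?T" by blast
  moreover have "finite ?T" using fin by (rule finite_subset[rotated]) auto
  ultimately show ?thesis using even by simp
qed

lemma happy_image_uminus:
  assumes "happy C" and antipodal: "\<And>X. X \<in> C \<Longrightarrow> L (uminus ` X) = - L X"
  shows "happy (image uminus ` C)"
proof -
  have "\<Union>(image uminus ` C) = uminus ` \<Union>C" by blast
  also have "\<dots> \<subseteq> uminus ` L ` C" using assms(1) unfolding happy_def by blast
  also have "\<dots> = L ` image uminus ` C" by (simp add: image_image antipodal cong: image_cong)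
  finally show ?thesis using sign_chain_image_uminus assms(1) unfolding happy_def by blast
qed

end

lemma complementary_free_labelling_extension:
  fixes N M :: nat and lab :: "int set \<Rightarrow> int"
  assumes "M < N"
    and label_range: "\<And>X. X \<in> signed_sets N \<Longrightarrow> X \<noteq> {} \<Longrightarrow> lab X \<noteq> 0 \<and> \<bar>lab X\<bar> \<le> int M"
    and no_complementary_edge:
      "\<And>X Y. X \<in> signed_sets N \<Longrightarrow> Y \<in> signed_sets N \<Longrightarrow> X \<noteq> {} \<Longrightarrow> X \<subseteq> Y \<Longrightarrow> lab X \<noteq> - lab Y"
  shows "complementary_free_labelling N (\<lambda>X. if X = {} then int N else lab X)"
proof
  show "X \<in> signed_sets N \<Longrightarrow> (if X = {} then int N else lab X) \<noteq> 0 \<and>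
      \<bar>if X = {} then int N else lab X\<bar> \<le> int N" for X
    using label_range[of X] \<open>M < N\<close> by (cases "X = {}") auto
  show "(if X = {} then int N else lab X) \<noteq> - (if Y = {} then int N else lab Y)"
    if "X \<in> signed_sets N" "Y \<in> signed_sets N" "X \<subseteq> Y" for X Y
  proof (cases "X = {}")
    case True
    then show ?thesis using label_range[OF that(2)] \<open>M < N\<close> by (cases "Y = {}") auto
  next
    case False
    then show ?thesis using no_complementary_edge[OF that(1,2) False that(3)] that(3) by auto
  qed
qed simp

theorem tucker_lemma:
  fixes N M :: nat and lab :: "int set \<Rightarrow> int"
  assumes label_range: "\<And>X. X \<in> signed_sets N \<Longrightarrow> X \<noteq> {} \<Longrightarrow> lab X \<noteq> 0 \<and> \<bar>lab X\<bar> \<le> int M"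
    and antipodal: "\<And>X. X \<in> signed_sets N \<Longrightarrow> X \<noteq> {} \<Longrightarrow> lab (uminus ` X) = - lab X"
    and no_complementary_edge:
      "\<And>X Y. X \<in> signed_sets N \<Longrightarrow> Y \<in> signed_sets N \<Longrightarrow> X \<noteq> {} \<Longrightarrow> X \<subseteq> Y \<Longrightarrow> lab X \<noteq> - lab Y"
  shows "N \<le> M"
proof (rule ccontr)
  assume "\<not> N \<le> M"
  define L where "L X = (if X = {} then int N else lab X)" for X
  interpret complementary_free_labelling N L
    unfolding L_def using \<open>\<not> N \<le> M\<close> label_range no_complementary_edge
    by (intro complementary_free_labelling_extension) auto
  let ?T = "{C. happy C \<and> {} \<notin> C \<and> card C = card (\<Union>C)}"
  have "even (card ?T)"
  proof (rule even_card_fixpoint_free_involution[where g = "image (image uminus)"])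
    show "finite ?T"
      by (rule finite_subset[OF _ finite_sign_chains]) (auto simp: happy_def)
  next
    fix C assume C: "C \<in> ?T"
    then have chain: "sign_chain N C" by (simp add: happy_def)
    have "L (uminus ` X) = - L X" if "X \<in> C" for X
      using antipodal[of X] that C chain unfolding L_def sign_chain_def by auto
    then have "happy (image uminus ` C)" using happy_image_uminus C by blast
    moreover have "card (image uminus ` C) = card C"
      by (rule card_image) (auto intro: inj_on_inverseI[where g = "image uminus"] simp: image_image)
    moreover have "card (\<Union>(image uminus ` C)) = card (\<Union>C)"
      by (simp add: card_image flip: image_Union)
    ultimately show "image (image uminus) C \<in> ?T" using C by auto
    show "image (image uminus) (image (image uminus) C) = C" by (simp add: image_image)
    show "image (image uminus) C \<noteq> C" using image_uminus_sign_chain_neq chain C by blast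
  qed
  then show False using odd_card_tight_happy_chains by simp
qed

section \<open>Alternation of sign vectors\<close>

definition sign_at :: "int set \<Rightarrow> nat \<Rightarrow> int" where
  "sign_at X i = (if int i \<in> X then 1 else if - int i \<in> X then -1 else 0)"

definition alternating :: "int set \<Rightarrow> nat \<Rightarrow> bool" where
  "alternating X k \<longleftrightarrow> (\<exists>p s. (s = 1 \<or> s = -1) \<and> (\<forall>j<k. sign_at X (p j) = s * (-1)^j) \<and>
     (\<forall>j. Suc j < k \<longrightarrow> p j < p (Suc j)))"

definition alternation :: "int set \<Rightarrow> nat" where
  "alternation X = (GREATEST k. alternating X k)"

definition first_sign :: "int set \<Rightarrow> int" where
  "first_sign X = sign_at X (LEAST i. sign_at X i \<noteq> 0)"

lemma increasing_steps_gap: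
  fixes p :: "nat \<Rightarrow> nat"
  assumes "\<forall>j. Suc j < k \<longrightarrow> p j < p (Suc j)" and "i \<le> j" and "j < k"
  shows "p i + (j - i) \<le> p j"
  using assms(2,3)
proof (induction j)
  case (Suc j)
  show ?case
  proof (cases "i = Suc j")
    case False
    then have "p i + (j - i) \<le> p j" using Suc by simp
    moreover have "p j < p (Suc j)" using assms(1) Suc.prems by simp
    ultimately show ?thesis using False Suc.prems by simp
  qed simp
qed simp

lemma sign_at_cases: "sign_at X i = 1 \<or> sign_at X i = -1 \<or> sign_at X i = 0"
  unfolding sign_at_def by auto

lemma sign_at_nonzero_bounds: "X \<in> signed_sets N \<Longrightarrow> sign_at X i \<noteq> 0 \<Longrightarrow> 1 \<le> i \<and> i \<le> N"
  unfolding sign_at_def signed_sets_def by (auto split: if_splits)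

lemma sign_at_image_uminus: "X \<in> signed_sets N \<Longrightarrow> sign_at (uminus ` X) i = - sign_at X i"
  unfolding sign_at_def signed_sets_def by (auto simp: image_iff) (metis add.inverse_inverse)+

lemma sign_at_mono:
  assumes "Y \<in> signed_sets N" "X \<subseteq> Y" "sign_at X i \<noteq> 0"
  shows "sign_at Y i = sign_at X i"
proof -
  have "X \<in> signed_sets N" using assms(1,2) by (rule signed_sets_subset)
  then show ?thesis using assms unfolding sign_at_def signed_sets_def by (auto split: if_splits)
qed

lemma alternating_le:
  assumes "X \<in> signed_sets N" and "alternating X k"
  shows "k \<le> N"
proof (cases k)
  case (Suc k')
  from assms(2) obtain p s where ps: "s = 1 \<or> s = -1" "\<forall>j<k. sign_at X (p j) = s * (-1)^j"
    "\<forall>j. Suc j < k \<longrightarrow> p j < p (Suc j)" unfolding alternating_def by blast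
  have "sign_at X (p j) \<noteq> 0" if "j < k" for j using ps that by auto
  then have "1 \<le> p 0" "p k' \<le> N" using sign_at_nonzero_bounds[OF assms(1)] Suc by auto
  moreover have "p 0 + k' \<le> p k'" using increasing_steps_gap[OF ps(3), of 0 k'] Suc by simp
  ultimately show ?thesis using Suc by simp
qed simp

lemma alternating_alternation: "X \<in> signed_sets N \<Longrightarrow> alternating X (alternation X)"
  unfolding alternation_def
  by (rule GreatestI_nat[of _ 0 N]) (auto simp: alternating_def alternating_le)

lemma alternating_le_alternation: "X \<in> signed_sets N \<Longrightarrow> alternating X k \<Longrightarrow> k \<le> alternation X"
  unfolding alternation_def by (rule Greatest_le_nat[of _ _ N]) (auto simp: alternating_le)

lemma alternating_mono:
  assumes "alternating X k" and "k' \<le> k"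
  shows "alternating X k'"
proof -
  obtain p s where "s = 1 \<or> s = -1" "\<forall>j<k. sign_at X (p j) = s * (-1)^j"
    "\<forall>j. Suc j < k \<longrightarrow> p j < p (Suc j)"
    using assms(1) unfolding alternating_def by blast
  then show ?thesis unfolding alternating_def using assms(2) by (intro exI[of _ p] exI[of _ s]) auto
qed

lemma alternating_opposite:
  assumes "alternating Z k" and opposite: "\<And>i. sign_at Y i = - sign_at Z i"
  shows "alternating Y k"
proof -
  obtain p s where ps: "s = 1 \<or> s = -1" "\<forall>j<k. sign_at Z (p j) = s * (-1)^j"
    "\<forall>j. Suc j < k \<longrightarrow> p j < p (Suc j)"
    using assms(1) unfolding alternating_def by blast
  have "\<forall>j<k. sign_at Y (p j) = (- s) * (-1)^j" using ps(2) opposite by simp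
  moreover have "- s = 1 \<or> - s = -1" using ps(1) by auto
  ultimately show ?thesis unfolding alternating_def using ps(3) by blast
qed

lemma alternating_image_uminus_iff:
  assumes "X \<in> signed_sets N"
  shows "alternating (uminus ` X) k \<longleftrightarrow> alternating X k"
  using alternating_opposite[of X k "uminus ` X"] alternating_opposite[of "uminus ` X" k X]
  by (auto simp: sign_at_image_uminus[OF assms])

lemma alternation_image_uminus:
  assumes "X \<in> signed_sets N"
  shows "alternation (uminus ` X) = alternation X"
proof -
  have "alternating (uminus ` X) = alternating X" using alternating_image_uminus_iff[OF assms] by blast
  then show ?thesis unfolding alternation_def by simp
qed

lemma first_sign_image_uminus: "X \<in> signed_sets N \<Longrightarrow> first_sign (uminus ` X) = - first_sign X"
  unfolding first_sign_def by (simp add: sign_at_image_uminus)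

lemma first_sign_cases:
  assumes "X \<in> signed_sets N" and "X \<noteq> {}"
  shows "first_sign X = 1 \<or> first_sign X = -1"
proof -
  obtain x where "x \<in> X" using assms(2) by blast
  then have "sign_at X (nat \<bar>x\<bar>) \<noteq> 0"
    using assms(1) unfolding sign_at_def signed_sets_def by (cases "x \<ge> 0") auto
  then have "sign_at X (LEAST i. sign_at X i \<noteq> 0) \<noteq> 0" by (rule LeastI)
  then show ?thesis unfolding first_sign_def using sign_at_cases by blast
qed

lemma alternation_pos:
  assumes "X \<in> signed_sets N" and "X \<noteq> {}"
  shows "1 \<le> alternation X"
proof -
  obtain i where "sign_at X i \<noteq> 0"
    using first_sign_cases[OF assms] unfolding first_sign_def by fastforce
  then have "alternating X 1"
    unfolding alternating_def using sign_at_cases[of X i] by (intro exI[of _ "\<lambda>_. i"]) force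
  then show ?thesis by (rule alternating_le_alternation[OF assms(1)])
qed

lemma alternating_prepend:
  assumes "s = 1 \<or> s = -1" and "\<forall>j<k. sign_at X (p j) = s * (-1)^j"
    and "\<forall>j. Suc j < k \<longrightarrow> p j < p (Suc j)" and "1 \<le> k" and "q < p 0" and "sign_at X q = - s"
  shows "alternating X (Suc k)"
proof -
  define p' where "p' j = (if j = 0 then q else p (j - 1))" for j
  have "sign_at X (p' j) = (- s) * (-1)^j" if "j < Suc k" for j
    using assms(2,6) that by (cases j) (auto simp: p'_def)
  moreover have "p' j < p' (Suc j)" if "Suc j < Suc k" for j
    using assms(3-5) that by (cases j) (auto simp: p'_def)
  moreover have "- s = 1 \<or> - s = -1" using assms(1) by auto
  ultimately show ?thesis unfolding alternating_def by blast
qed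

lemma first_sign_eq_start_sign:
  assumes X: "X \<in> signed_sets N" and "1 \<le> alternation X"
    and ps: "s = 1 \<or> s = -1" "\<forall>j<alternation X. sign_at X (p j) = s * (-1)^j"
      "\<forall>j. Suc j < alternation X \<longrightarrow> p j < p (Suc j)"
  shows "first_sign X = s"
proof (rule ccontr)
  assume "first_sign X \<noteq> s"
  define i where "i = (LEAST i. sign_at X i \<noteq> 0)"
  have "sign_at X (p 0) = s" using ps(2) assms(2) by auto
  then have "sign_at X (p 0) \<noteq> 0" using ps(1) by auto
  then have "i \<le> p 0" "sign_at X i \<noteq> 0" unfolding i_def by (rule Least_le, rule LeastI)
  then have "sign_at X i = - s"
    using \<open>first_sign X \<noteq> s\<close> ps(1) sign_at_cases[of X i] unfolding first_sign_def i_def[symmetric] by auto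
  then have "i < p 0" using \<open>i \<le> p 0\<close> \<open>sign_at X (p 0) = s\<close> ps(1) by (cases "i = p 0") auto
  then have "alternating X (Suc (alternation X))"
    using alternating_prepend[OF ps assms(2)] \<open>sign_at X i = - s\<close> by blast
  then show False using alternating_le_alternation[OF X] by fastforce
qed

lemma first_sign_eq_if_alternation_eq:
  assumes X: "X \<in> signed_sets N" "X \<noteq> {}" and Y: "Y \<in> signed_sets N"
    and "X \<subseteq> Y" and same: "alternation X = alternation Y"
  shows "first_sign X = first_sign Y"
proof -
  obtain p s where ps: "s = 1 \<or> s = -1" "\<forall>j<alternation X. sign_at X (p j) = s * (-1)^j"
    "\<forall>j. Suc j < alternation X \<longrightarrow> p j < p (Suc j)"
    using alternating_alternation[OF X(1)] unfolding alternating_def by blast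
  have "1 \<le> alternation X" using alternation_pos[OF X] .
  moreover have "\<forall>j<alternation Y. sign_at Y (p j) = s * (-1)^j"
    using ps(1,2) sign_at_mono[OF Y \<open>X \<subseteq> Y\<close>] same by auto
  ultimately show ?thesis
    using first_sign_eq_start_sign[OF X(1) _ ps] first_sign_eq_start_sign[OF Y _ ps(1)] ps(3) same by simp
qed

definition pos_part :: "int set \<Rightarrow> nat set" where
  "pos_part X = {i. int i \<in> X}"

definition neg_part :: "int set \<Rightarrow> nat set" where
  "neg_part X = {i. - int i \<in> X}"

lemma pos_part_neg_part_disjoint: "X \<in> signed_sets N \<Longrightarrow> pos_part X \<inter> neg_part X = {}"
  unfolding pos_part_def neg_part_def signed_sets_def by auto

lemma pos_part_image_uminus [simp]: "pos_part (uminus ` X) = neg_part X"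
  unfolding pos_part_def neg_part_def by (auto simp: image_iff) (metis minus_minus)

lemma neg_part_image_uminus [simp]: "neg_part (uminus ` X) = pos_part X"
  unfolding pos_part_def neg_part_def by (auto simp: image_iff)

lemma pos_part_mono: "X \<subseteq> Y \<Longrightarrow> pos_part X \<subseteq> pos_part Y"
  unfolding pos_part_def by auto

lemma neg_part_mono: "X \<subseteq> Y \<Longrightarrow> neg_part X \<subseteq> neg_part Y"
  unfolding neg_part_def by auto

lemma sign_at_eq_1_iff: "sign_at X i = 1 \<longleftrightarrow> i \<in> pos_part X"
  unfolding sign_at_def pos_part_def by auto

lemma sign_at_eq_minus_1_iff: "X \<in> signed_sets N \<Longrightarrow> sign_at X i = -1 \<longleftrightarrow> i \<in> neg_part X"
  unfolding sign_at_def neg_part_def signed_sets_def by auto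

lemma finite_pos_part: "finite X \<Longrightarrow> finite (pos_part X)"
  unfolding pos_part_def by (rule finite_vimageI[of X int, unfolded vimage_def]) (auto intro: injI)

lemma finite_neg_part: "finite X \<Longrightarrow> finite (neg_part X)"
  unfolding neg_part_def by (rule finite_vimageI[of X "\<lambda>i. - int i", unfolded vimage_def]) (auto intro: injI)

section \<open>Colourings of Kneser graphs\<close>

definition colouring :: "'a set \<Rightarrow> ('a \<Rightarrow> 'a \<Rightarrow> bool) \<Rightarrow> nat \<Rightarrow> ('a \<Rightarrow> nat) \<Rightarrow> bool" where
  "colouring V adj k f \<longleftrightarrow> (\<forall>v\<in>V. f v < k) \<and> (\<forall>u\<in>V. \<forall>v\<in>V. adj u v \<longrightarrow> f u \<noteq> f v)"

lemma colouring_subset: "colouring W adj k f \<Longrightarrow> V \<subseteq> W \<Longrightarrow> colouring V adj k f"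
  unfolding colouring_def by blast

lemma chromatic_number_eqI:
  assumes "colouring V adj k f" and "\<And>K g. colouring V adj K g \<Longrightarrow> k \<le> K"
  shows "chromatic_number V adj = k"
  unfolding chromatic_number_def
  by (rule Least_equality) (use assms in \<open>auto simp: colouring_def\<close>)

lemma kneser_colouring_by_min:
  assumes "1 \<le> r" and members: "\<And>B. B \<in> F \<Longrightarrow> B \<subseteq> {1..n} \<and> card B = r"
  shows "colouring F kneser_adj (n - 2*r + 2) (\<lambda>B. min (Min B - 1) (n - 2*r + 1))"
  unfolding colouring_def
proof (intro conjI ballI impI)
  fix A B assume "A \<in> F" "B \<in> F" "kneser_adj A B"
  then have A: "A \<subseteq> {1..n}" "card A = r" and B: "B \<subseteq> {1..n}" "card B = r" and "A \<inter> B = {}"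
    using members unfolding kneser_adj_def by auto
  have "finite A" "A \<noteq> {}" "finite B" "B \<noteq> {}"
    using A B assms(1) by (auto intro: finite_subset)
  then have min_A: "Min A \<in> A" "\<forall>x\<in>A. Min A \<le> x" and min_B: "Min B \<in> B" "\<forall>x\<in>B. Min B \<le> x" by auto
  show "min (Min A - 1) (n - 2*r + 1) \<noteq> min (Min B - 1) (n - 2*r + 1)"
  proof
    assume "min (Min A - 1) (n - 2*r + 1) = min (Min B - 1) (n - 2*r + 1)"
    moreover have "1 \<le> Min A" "1 \<le> Min B" using min_A(1) min_B(1) A(1) B(1) by auto
    ultimately consider "Min A = Min B" | "n - 2*r + 2 \<le> Min A" "n - 2*r + 2 \<le> Min B" by linarith
    then show False
    proof cases
      case 1
      then show False using min_A(1) min_B(1) \<open>A \<inter> B = {}\<close> by auto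
    next
      case 2
      then have "A \<union> B \<subseteq> {n - 2*r + 2..n}" using A(1) B(1) min_A(2) min_B(2) by fastforce
      then have "card (A \<union> B) \<le> card {n - 2*r + 2..n}" by (intro card_mono) auto
      moreover have "card (A \<union> B) = 2*r"
        using card_Un_disjoint[OF \<open>finite A\<close> \<open>finite B\<close> \<open>A \<inter> B = {}\<close>] A(2) B(2) by simp
      ultimately show False using assms(1) by simp
    qed
  qed
qed auto

locale kneser_alternation_colouring =
  fixes N a K :: nat and F :: "nat set set" and f :: "nat set \<Rightarrow> nat"
  assumes empty_notin: "{} \<notin> F"
    and alternating_contains:
      "\<And>X. X \<in> signed_sets N \<Longrightarrow> alternating X a \<Longrightarrow> \<exists>B\<in>F. B \<subseteq> pos_part X \<or> B \<subseteq> neg_part X"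
    and colouring: "colouring F kneser_adj K f"
begin

definition side_members :: "int set \<Rightarrow> nat set set" where
  "side_members X = {B\<in>F. B \<subseteq> pos_part X \<or> B \<subseteq> neg_part X}"

definition top_colour :: "int set \<Rightarrow> nat" where
  "top_colour X = Max (f ` side_members X)"

definition top_side :: "int set \<Rightarrow> int" where
  "top_side X = (if \<exists>B\<in>F. B \<subseteq> pos_part X \<and> f B = top_colour X then 1 else -1)"

(* The shift by a keeps the labels of large alternation apart from the signed alternation
   numbers, which lie below a. *)
definition label :: "int set \<Rightarrow> int" where
  "label X = (if alternation X < a then first_sign X * int (alternation X)
              else top_side X * int (a + top_colour X))"

lemma one_le_a: "1 \<le> a"
proof (rule ccontr)
  assume "\<not> 1 \<le> a"
  then have "alternating {} a" unfolding alternating_def by (intro exI[of _ id] exI[of _ 1]) simp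
  then obtain B where "B \<in> F" "B \<subseteq> pos_part {} \<or> B \<subseteq> neg_part {}"
    using alternating_contains[of "{}"] by auto
  then show False using empty_notin by (auto simp: pos_part_def neg_part_def)
qed

lemma colours_differ_across_sides:
  assumes "X \<in> signed_sets N" "B1 \<in> F" "B2 \<in> F" "B1 \<subseteq> pos_part X" "B2 \<subseteq> neg_part X"
  shows "f B1 \<noteq> f B2"
proof -
  have "B1 \<inter> B2 = {}" using pos_part_neg_part_disjoint[OF assms(1)] assms(4,5) by blast
  moreover have "B1 \<noteq> {}" using assms(2) empty_notin by blast
  ultimately have "kneser_adj B1 B2" unfolding kneser_adj_def by auto
  then show ?thesis using colouring assms(2,3) unfolding colouring_def by blast
qed

lemma top_colour_attained:
  assumes "X \<in> signed_sets N" and "a \<le> alternation X"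
  shows "\<exists>B\<in>side_members X. f B = top_colour X" and "top_colour X < K"
proof -
  have "alternating X a" using alternating_mono[OF alternating_alternation[OF assms(1)] assms(2)] .
  then have "side_members X \<noteq> {}"
    using alternating_contains[OF assms(1)] unfolding side_members_def by blast
  moreover have "finite (side_members X)"
    by (rule finite_subset[of _ "Pow (pos_part X) \<union> Pow (neg_part X)"])
      (auto simp: side_members_def finite_pos_part finite_neg_part finite_signed_set[OF assms(1)])
  ultimately have "top_colour X \<in> f ` side_members X" unfolding top_colour_def by (intro Max_in) auto
  then show "\<exists>B\<in>side_members X. f B = top_colour X" by auto
  then show "top_colour X < K" using colouring unfolding colouring_def side_members_def by auto
qed

lemma top_side_cases: "top_side X = 1 \<or> top_side X = -1"
  unfolding top_side_def by auto

lemma top_side_image_uminus: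
  assumes "X \<in> signed_sets N" and "a \<le> alternation X"
  shows "top_side (uminus ` X) = - top_side X"
proof -
  have colour: "top_colour (uminus ` X) = top_colour X"
    unfolding top_colour_def side_members_def by (simp add: disj_commute)
  obtain B0 where B0: "B0 \<in> F" "B0 \<subseteq> pos_part X \<or> B0 \<subseteq> neg_part X" "f B0 = top_colour X"
    using top_colour_attained(1)[OF assms] unfolding side_members_def by blast
  show ?thesis
  proof (cases "B0 \<subseteq> pos_part X")
    case True
    then have "\<not> (\<exists>B\<in>F. B \<subseteq> neg_part X \<and> f B = top_colour X)"
      using colours_differ_across_sides[OF assms(1) B0(1)] B0(3) by fastforce
    then show ?thesis using True B0 unfolding top_side_def colour by auto
  next
    case False
    then have "B0 \<subseteq> neg_part X" using B0(2) by blast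
    then have "\<not> (\<exists>B\<in>F. B \<subseteq> pos_part X \<and> f B = top_colour X)"
      using colours_differ_across_sides[OF assms(1) _ B0(1)] B0(3) by fastforce
    then show ?thesis using \<open>B0 \<subseteq> neg_part X\<close> B0 unfolding top_side_def colour by auto
  qed
qed

lemma top_side_mono:
  assumes X: "X \<in> signed_sets N" and Y: "Y \<in> signed_sets N" and "X \<subseteq> Y"
    and "a \<le> alternation X" and same_colour: "top_colour X = top_colour Y"
  shows "top_side X = top_side Y"
proof (cases "top_side X = 1")
  case True
  then obtain B where "B \<in> F" "B \<subseteq> pos_part X" "f B = top_colour Y"
    using same_colour unfolding top_side_def by (auto split: if_splits)
  then have "top_side Y = 1" using pos_part_mono[OF \<open>X \<subseteq> Y\<close>] unfolding top_side_def by auto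
  then show ?thesis using True by simp
next
  case False
  then have "top_side X = -1" using top_side_cases[of X] by simp
  obtain B where B: "B \<in> side_members X" "f B = top_colour X"
    using top_colour_attained(1)[OF X \<open>a \<le> alternation X\<close>] by auto
  then have "\<not> B \<subseteq> pos_part X" using False unfolding top_side_def side_members_def by (auto split: if_splits)
  then have "B \<in> F" "B \<subseteq> neg_part Y"
    using B(1) neg_part_mono[OF \<open>X \<subseteq> Y\<close>] unfolding side_members_def by blast+
  then have "\<not> (\<exists>B'\<in>F. B' \<subseteq> pos_part Y \<and> f B' = top_colour Y)"
    using colours_differ_across_sides[OF Y] B(2) same_colour by metis
  then show ?thesis using \<open>top_side X = -1\<close> unfolding top_side_def by simp
qed

lemma label_range:
  assumes "X \<in> signed_sets N" and "X \<noteq> {}"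
  shows "label X \<noteq> 0 \<and> \<bar>label X\<bar> \<le> int (a - 1 + K)"
proof (cases "alternation X < a")
  case True
  then show ?thesis
    using first_sign_cases[OF assms] alternation_pos[OF assms] unfolding label_def by (auto simp: abs_mult)
next
  case False
  then show ?thesis using top_colour_attained(2)[OF assms(1)] top_side_cases[of X] one_le_a
    unfolding label_def by (auto simp: abs_mult)
qed

lemma label_image_uminus:
  assumes "X \<in> signed_sets N"
  shows "label (uminus ` X) = - label X"
  using alternation_image_uminus[OF assms] first_sign_image_uminus[OF assms]
    top_side_image_uminus[OF assms] unfolding label_def top_colour_def side_members_def
  by (simp add: disj_commute)

lemma label_no_complementary_edge:
  assumes X: "X \<in> signed_sets N" "X \<noteq> {}" and Y: "Y \<in> signed_sets N" and "X \<subseteq> Y"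
  shows "label X \<noteq> - label Y"
proof
  assume complementary: "label X = - label Y"
  have "Y \<noteq> {}" using X(2) \<open>X \<subseteq> Y\<close> by blast
  have abs_label: "\<bar>label Z\<bar> = (if alternation Z < a then int (alternation Z) else int (a + top_colour Z))"
    if "Z \<in> signed_sets N" "Z \<noteq> {}" for Z
    using first_sign_cases[OF that] top_side_cases[of Z] unfolding label_def by (auto simp: abs_mult)
  have "\<bar>label X\<bar> = \<bar>label Y\<bar>" using complementary by simp
  then consider (small) "alternation X < a" "alternation Y < a" "alternation X = alternation Y"
    | (large) "\<not> alternation X < a" "\<not> alternation Y < a" "top_colour X = top_colour Y"
    using abs_label[OF X] abs_label[OF Y \<open>Y \<noteq> {}\<close>] by (auto split: if_splits)
  then show False
  proof cases
    case small
    then have "first_sign X = first_sign Y" using first_sign_eq_if_alternation_eq[OF X Y \<open>X \<subseteq> Y\<close>] by simp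
    then show False using complementary small first_sign_cases[OF X] alternation_pos[OF X]
      unfolding label_def by auto
  next
    case large
    then have "(top_side X + top_side Y) * int (a + top_colour X) = 0"
      using complementary unfolding label_def by (simp add: algebra_simps)
    then have "top_side X = - top_side Y" using one_le_a by simp
    moreover have "top_side X = top_side Y" using top_side_mono[OF X(1) Y \<open>X \<subseteq> Y\<close>] large by simp
    ultimately show False using top_side_cases[of X] by auto
  qed
qed

theorem alternation_colour_bound: "N < a + K"
proof -
  have "N \<le> a - 1 + K"
    by (rule tucker_lemma[of N label]) (use label_range label_image_uminus label_no_complementary_edge in auto)
  then show ?thesis using one_le_a by linarith
qed

end

section \<open>Catalan matroids\<close>

lemma image_in_catalan_minus_bases:
  fixes q :: "nat \<Rightarrow> nat"
  assumes increasing: "\<And>i i'. i < i' \<Longrightarrow> i' < r \<Longrightarrow> q i < q i'"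
    and bounds: "\<And>i. i < r \<Longrightarrow> 2*(i+1) - 1 \<le> q i \<and> q i \<le> m + 2*(i+1) - r"
  shows "q ` {..<r} \<in> catalan_minus_bases r m"
proof -
  have "sorted_wrt (<) (map q [0..<r])"
    unfolding sorted_wrt_map by (intro sorted_wrt_mono_rel[OF _ sorted_wrt_upt]) (auto intro: increasing)
  then have sorted: "sorted (map q [0..<r])" and distinct: "distinct (map q [0..<r])"
    by (auto simp: strict_sorted_iff)
  have "set (map q [0..<r]) = q ` {..<r}" by auto
  moreover have "sorted_list_of_set (set (map q [0..<r])) = map q [0..<r]"
    using sorted distinct by (rule sorted_list_of_set.idem_if_sorted_distinct)
  moreover have "card (set (map q [0..<r])) = r" using distinct_card[OF distinct] by simp
  moreover have "q ` {..<r} \<subseteq> {1..m+r}"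
  proof
    fix b assume "b \<in> q ` {..<r}"
    then obtain i where "i < r" "b = q i" by blast
    then show "b \<in> {1..m+r}" using bounds[of i] by auto
  qed
  ultimately show ?thesis unfolding catalan_minus_bases_def using bounds by auto
qed

lemma alternating_contains_catalan_minus_basis:
  assumes "1 \<le> r" and X: "X \<in> signed_sets (m + r)" and "alternating X (2*r - 1)"
  shows "\<exists>B\<in>catalan_minus_bases r m. B \<subseteq> pos_part X \<or> B \<subseteq> neg_part X"
proof -
  obtain p s where ps: "s = 1 \<or> s = -1" "\<forall>j<2*r - 1. sign_at X (p j) = s * (-1)^j"
    "\<forall>j. Suc j < 2*r - 1 \<longrightarrow> p j < p (Suc j)"
    using assms(3) unfolding alternating_def by blast
  have gap: "p i + (j - i) \<le> p j" if "i \<le> j" "j < 2*r - 1" for i j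
    using increasing_steps_gap[OF ps(3) that] .
  have bounds: "1 \<le> p j \<and> p j \<le> m + r" if "j < 2*r - 1" for j
    using sign_at_nonzero_bounds[OF X] ps(1,2) that by fastforce
  \<comment> \<open>every other term of the alternating sequence carries the sign s\<close>
  define q where "q i = p (2*i)" for i
  have "q i < q i'" if "i < i'" "i' < r" for i i'
  proof -
    have "p (2*i) + (2*i' - 2*i) \<le> p (2*i')" using that by (intro gap) auto
    then show ?thesis using that unfolding q_def by simp
  qed
  moreover have "2*(i+1) - 1 \<le> q i \<and> q i \<le> m + 2*(i+1) - r" if "i < r" for i
  proof -
    define t where "t = 2*r - 2"
    have "2*i \<le> t" "t < 2*r - 1" "0 < 2*r - 1" "2*i < 2*r - 1" "t + 2 = 2*r"
      using that assms(1) unfolding t_def by auto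
    moreover obtain e where "t = 2*i + e" using \<open>2*i \<le> t\<close> le_Suc_ex by blast
    ultimately have "p 0 + 2*i \<le> p (2*i)" "p (2*i) + e \<le> p t" "1 \<le> p 0" "p t \<le> m + r"
      using gap[of 0 "2*i"] gap[of "2*i" t] bounds[of 0] bounds[of t] by auto
    then have "2*i + 1 \<le> p (2*i)" "p (2*i) + r \<le> m + 2*i + 2"
      using \<open>t = 2*i + e\<close> \<open>t + 2 = 2*r\<close> by linarith+
    then show ?thesis unfolding q_def by simp
  qed
  ultimately have "q ` {..<r} \<in> catalan_minus_bases r m" by (rule image_in_catalan_minus_bases)
  moreover have "sign_at X b = s" if "b \<in> q ` {..<r}" for b
    using that ps(2) unfolding q_def by auto
  then have "q ` {..<r} \<subseteq> pos_part X \<or> q ` {..<r} \<subseteq> neg_part X"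
    using ps(1) sign_at_eq_1_iff[of X] sign_at_eq_minus_1_iff[OF X] by blast
  ultimately show ?thesis by blast
qed

lemma catalan_minus_colouring_bound:
  assumes "1 \<le> r" "r \<le> m" and "colouring (catalan_minus_bases r m) kneser_adj K f"
  shows "m - r + 2 \<le> K"
proof -
  interpret kneser_alternation_colouring "m + r" "2*r - 1" K "catalan_minus_bases r m" f
  proof
    show "{} \<notin> catalan_minus_bases r m" using assms(1) by (auto simp: catalan_minus_bases_def)
  qed (use alternating_contains_catalan_minus_basis[OF assms(1)] assms(3) in auto)
  show ?thesis using alternation_colour_bound assms(1,2) by linarith
qed

theorem proposition4p8:
  fixes r m :: nat
  assumes "1 \<le> r" and "r \<le> m"
  shows "chi_KG (catalan_bases r m) = m - r + 2 \<and>
         chi_KG (catalan_minus_bases r m) = m - r + 2"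
proof -
  have "colouring (catalan_bases r m) kneser_adj (m + r - 2*r + 2) (\<lambda>B. min (Min B - 1) (m + r - 2*r + 1))"
    using assms(1) by (rule kneser_colouring_by_min) (simp add: catalan_bases_def)
  then have upper: "colouring (catalan_bases r m) kneser_adj (m - r + 2) (\<lambda>B. min (Min B - 1) (m - r + 1))"
    by simp
  have sub: "catalan_minus_bases r m \<subseteq> catalan_bases r m"
    unfolding catalan_minus_bases_def catalan_bases_def by auto
  have lower: "m - r + 2 \<le> K" if "colouring (catalan_minus_bases r m) kneser_adj K g" for K g
    using catalan_minus_colouring_bound[OF assms that] .
  have "chromatic_number (catalan_bases r m) kneser_adj = m - r + 2"
    using upper by (rule chromatic_number_eqI) (use lower colouring_subset[OF _ sub] in blast)
  moreover have "chromatic_number (catalan_minus_bases r m) kneser_adj = m - r + 2"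
    using colouring_subset[OF upper sub] lower by (rule chromatic_number_eqI)
  ultimately show ?thesis unfolding chi_KG_def by blast
qed

end
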